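(* Let $a,b$ be positive integers with $1<b/a\le 2$, and let $c$ be the remainder upon division of $a$ by $b-a$ (so $0\le c<b-a$). Let $V=\langle 1,u^c,u^{b-a}\rangle\subset S_{b-a}$. Then $\mu_V(W)\ge b/a$ for every nonzero linear subspace $W\subset S_{a-1}$.
   Context: Over $\mathbb{C}$, $S_a$ denotes the space of polynomials in one variable $u$ of degree at most $a$. For subspaces $V,W$, $V\cdot W$ is the span of products $fg$ ($f\in V$, $g\in W$), and for nonzero $W\subset S_{a-1}$, $\mu_V(W)=\dim(V\cdot W)/\dim W$. *)

theory Defs
  imports Main "HOL-Computational_Algebra.Polynomial"
begin

interpretation pvs: vector_space "smult :: complex \<Rightarrow> complex poly \<Rightarrow> complex poly"
  by unfold_locales (auto simp: smult_add_right smult_add_left)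

definition S :: "nat \<Rightarrow> complex poly set" where
  "S a = {p. degree p \<le> a}"

definition prodsp :: "complex poly set \<Rightarrow> complex poly set \<Rightarrow> complex poly set" where
  "prodsp V W = pvs.span {f * g | f g. f \<in> V \<and> g \<in> W}"

definition mu :: "complex poly set \<Rightarrow> complex poly set \<Rightarrow> real" where
  "mu V W = real (pvs.dim (prodsp V W)) / real (pvs.dim W)"

end

theory Submission
  imports Defs
begin

(*
  Write d = b - a, so b = a + d, 0 < d \<le> a and c = a mod d.
  For a subspace X of S_n let degs X be the set of degrees of its nonzero
  elements; reducing leading terms shows dim X = card (degs X).  Since
  1, u^c, u^d lie in V, the degree set of V \<cdot> W contains the sumset
  A + {0, c, d} with A = degs W \<subseteq> {0, ..., a - 1}.  The theorem therefore
  reduces to the additive inequality (a + d) |A| \<le> a |A + {0, c, d}|.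

  That inequality is proved one residue class mod d at a time: the class of
  A + {0, c, d} indexed by (r + c) mod d is larger than the corresponding
  class of A (adding d) and at least as large as class r of A (adding c).
  An integer estimate per column (column_inequality) with a correction term
  G that telescopes over the permutation r \<mapsto> (r + c) mod d gives the bound.
*)

definition residue_class :: "nat \<Rightarrow> nat \<Rightarrow> nat set \<Rightarrow> nat set" where
  "residue_class d s X = {x \<in> X. x mod d = s}"

lemma card_eq_sum_residue_classes:
  assumes "0 < d" "finite X"
  shows "card X = (\<Sum>s<d. card (residue_class d s X))"
proof -
  have "X = (\<Union>s<d. residue_class d s X)"
    using assms(1) by (auto simp: residue_class_def)
  moreover have "card (\<Union>s<d. residue_class d s X) = (\<Sum>s<d. card (residue_class d s X))"
    using assms(2) by (intro card_UN_disjoint) (auto simp: residue_class_def)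
  ultimately show ?thesis by simp
qed

lemma card_residue_class_lessThan:
  assumes "0 < d" "s < d"
  shows "card (residue_class d s {..<a}) = (if s < a mod d then a div d + 1 else a div d)"
proof -
  define q c where "q = a div d" and "c = a mod d"
  have a: "a = q * d + c" by (simp add: q_def c_def)
  have "c < d" using assms(1) by (simp add: c_def)
  define n where "n = (if s < c then q + 1 else q)"
  have "residue_class d s {..<a} = (\<lambda>i. s + i * d) ` {..<n}"
  proof (intro set_eqI iffI)
    fix x assume "x \<in> residue_class d s {..<a}"
    then have x: "x < a" "x mod d = s" by (auto simp: residue_class_def)
    then have x_eq: "x = s + x div d * d" by (metis add.commute div_mult_mod_eq)
    have "x div d * d < n * d"
    proof (cases "s < c")
      case True
      then show ?thesis using x(1) x_eq a \<open>c < d\<close> by (simp add: n_def)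
    next
      case False
      then have "x div d * d < q * d" using x(1) x_eq a by linarith
      then show ?thesis using False by (simp add: n_def)
    qed
    then have "x div d < n" by simp
    with x_eq show "x \<in> (\<lambda>i. s + i * d) ` {..<n}" by auto
  next
    fix x assume "x \<in> (\<lambda>i. s + i * d) ` {..<n}"
    then obtain i where i: "i < n" "x = s + i * d" by auto
    have "x < a"
    proof (cases "s < c")
      case True
      then have "i * d \<le> q * d" using i(1) by (simp add: n_def)
      then show ?thesis using i(2) True a by linarith
    next
      case False
      then have "i + 1 \<le> q" using i(1) by (simp add: n_def)
      then have "(i + 1) * d \<le> q * d" by (rule mult_le_mono1)
      then show ?thesis using i(2) False a assms(2) by simp
    qed
    moreover have "x mod d = s" using i assms(2) by simp
    ultimately show "x \<in> residue_class d s {..<a}" by (simp add: residue_class_def)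
  qed
  moreover have "inj_on (\<lambda>i. s + i * d) {..<n}" using assms(1) by (auto simp: inj_on_def)
  ultimately show ?thesis by (simp add: card_image n_def q_def c_def)
qed

lemma card_residue_class_le:
  assumes "0 < d" "r < d" "A \<subseteq> {..<a}"
  shows "card (residue_class d r A) \<le> (if r < a mod d then a div d + 1 else a div d)"
proof -
  have "card (residue_class d r A) \<le> card (residue_class d r {..<a})"
    using assms(3) by (intro card_mono) (auto simp: residue_class_def)
  then show ?thesis using card_residue_class_lessThan[OF assms(1,2)] by simp
qed

(* If T contains A and A shifted by d, a nonempty class of T strictly exceeds the
   class of A: the maximum of the class plus d is new. *)
lemma card_residue_class_add_period:
  assumes "0 < d" "finite T" "\<forall>x\<in>A. x \<in> T \<and> x + d \<in> T"
    and "residue_class d s A \<noteq> {}"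
  shows "card (residue_class d s A) < card (residue_class d s T)"
proof -
  let ?B = "residue_class d s A"
  have "?B \<subseteq> T" using assms(3) by (auto simp: residue_class_def)
  then have fin: "finite ?B" using assms(2) by (rule finite_subset)
  define m where "m = Max ?B"
  have m: "m \<in> ?B" using fin assms(4) by (simp add: m_def)
  have "m + d \<notin> ?B" using Max_ge[OF fin] assms(1) m_def by fastforce
  moreover have "insert (m + d) ?B \<subseteq> residue_class d s T"
    using m assms(3) by (auto simp: residue_class_def)
  ultimately have "card (insert (m + d) ?B) \<le> card (residue_class d s T)"
    using assms(2) by (intro card_mono) (auto simp: residue_class_def)
  then show ?thesis using fin \<open>m + d \<notin> ?B\<close> by simp
qed

(* Shifting by c maps residue class r injectively into class (r + c) mod d. *)
lemma card_residue_class_shift: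
  assumes "finite T" "\<forall>x\<in>A. x + c \<in> T"
  shows "card (residue_class d r A) \<le> card (residue_class d ((r + c) mod d) T)"
proof (rule card_inj_on_le)
  show "inj_on (\<lambda>x. x + c) (residue_class d r A)" by simp
  show "(\<lambda>x. x + c) ` residue_class d r A \<subseteq> residue_class d ((r + c) mod d) T"
    using assms(2) by (auto simp: residue_class_def mod_add_left_eq)
  show "finite (residue_class d ((r + c) mod d) T)"
    using assms(1) by (simp add: residue_class_def)
qed

lemma bij_shift_mod:
  fixes d c :: nat
  assumes "0 < d"
  shows "bij_betw (\<lambda>r. (r + c) mod d) {..<d} {..<d}"
proof -
  let ?f = "\<lambda>r. (r + c) mod d"
  have inverse: "?f ((s + (d - c mod d)) mod d) = s" if "s < d" for s
  proof -
    have "?f ((s + (d - c mod d)) mod d) = (s + (d - c mod d) + c mod d) mod d"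
      by (metis mod_add_left_eq mod_add_right_eq)
    also have "\<dots> = (s + d) mod d" using mod_less_divisor[OF assms, of c] by simp
    finally show ?thesis using that by simp
  qed
  have "s \<in> ?f ` {..<d}" if "s < d" for s
  proof (rule image_eqI)
    show "s = ?f ((s + (d - c mod d)) mod d)" using inverse[OF that] by simp
  qed (use assms in simp)
  then have onto: "?f ` {..<d} = {..<d}" using assms by auto
  then have "inj_on ?f {..<d}" by (simp add: eq_card_imp_inj_on)
  with onto show ?thesis by (simp add: bij_betw_def)
qed

(* Column s = (r + c) mod d of the sumset has tau
   elements, columns s and r of A have t and t' elements, and C x = card of column x of
   {0, ..., a - 1}.  The left side is G s - G r, where G x = x - d + 1 if column x of A
   is full and 0 otherwise; these correction terms cancel when summed over all r. *)
lemma column_inequality: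
  fixes a d c q r s t t' \<tau> :: int and C :: "int \<Rightarrow> int"
  assumes c: "0 \<le> c" "c < d" and q: "1 \<le> q" "a = q * d + c" and r: "0 \<le> r" "r < d"
    and s: "s = (r + c) mod d"
    and C: "C = (\<lambda>x. if x < c then q + 1 else q)"
    and t: "0 \<le> t" "t \<le> C s" and t': "0 \<le> t'" "t' \<le> C r"
    and grow: "0 < t \<Longrightarrow> t + 1 \<le> \<tau>" and shift: "t' \<le> \<tau>"
  shows "(if t = C s then s - d + 1 else 0) - (if t' = C r then r - d + 1 else 0)
           \<le> a * \<tau> - (a + d) * t"
proof -
  have "0 < d" using c by simp
  have "1 * d \<le> q * d" using q(1) \<open>0 < d\<close> by (intro mult_right_mono) auto
  then have "d \<le> a" using c(1) q(2) by simp
  then have "0 \<le> a" using \<open>0 < d\<close> by simp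
  have s_cases: "s = r + c \<and> c \<le> s \<or> s = r + c - d \<and> s < c"
  proof (cases "r + c < d")
    case True
    then have "s = r + c" using s c(1) r(1) by simp
    then show ?thesis using r(1) by simp
  next
    case False
    then have "s = r + c - d" using s c r mod_pos_pos_trivial[of "r + c - d" d]
      by (simp add: mod_diff_eq[symmetric])
    then show ?thesis using r(2) by simp
  qed
  have "0 \<le> s" using s \<open>0 < d\<close> by simp
  have G_bound: "-(if t' = C r then r - d + 1 else 0) \<le> (if t' = C r then d - 1 - r else 0)"
    by simp
  show ?thesis
  proof (cases "t = 0")
    case True
    have "a * t' \<le> a * \<tau>" using shift \<open>0 < d\<close> \<open>d \<le> a\<close> by (intro mult_left_mono) auto
    moreover have "a * 1 \<le> a * t'" if "t' = C r"
      using that q(1) \<open>0 < d\<close> \<open>d \<le> a\<close> C by (intro mult_left_mono) auto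
    moreover have "0 \<le> a * t'" using \<open>0 \<le> a\<close> t'(1) by simp
    moreover have "t \<noteq> C s" using True C q(1) by auto
    ultimately show ?thesis using True \<open>d \<le> a\<close> r(1) G_bound
      by (cases "t' = C r") simp_all
  next
    case False
    then have "a * (t + 1) \<le> a * \<tau>" using grow t(1) \<open>0 < d\<close> \<open>d \<le> a\<close>
      by (intro mult_left_mono) auto
    then have base: "a - d * t \<le> a * \<tau> - (a + d) * t" by (simp add: algebra_simps)
    have column_size: "a - d * C s = (if s < c then c - d else c)"
      using C q(2) by (simp add: algebra_simps)
    show ?thesis
    proof (cases "t = C s")
      case True
      then show ?thesis using base column_size s_cases G_bound r by auto
    next
      case False
      then have "d * t \<le> d * (C s - 1)"
        using \<open>0 < d\<close> t(2) by (intro mult_left_mono) auto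
      then have "a - d * C s + d \<le> a - d * t" by (simp add: algebra_simps)
      then show ?thesis using False base column_size s_cases G_bound \<open>0 \<le> s\<close> c(1) r
        by (cases "s < c") auto
    qed
  qed
qed

lemma sum_nonneg_by_potential:
  fixes F G :: "nat \<Rightarrow> int"
  assumes "bij_betw \<sigma> {..<d} {..<d}"
    and "\<And>r. r < d \<Longrightarrow> G (\<sigma> r) - G r \<le> F (\<sigma> r)"
  shows "0 \<le> (\<Sum>r<d. F r)"
proof -
  have reindex: "(\<Sum>r<d. f (\<sigma> r)) = (\<Sum>r<d. f r)" for f :: "nat \<Rightarrow> int"
    using sum.reindex_bij_betw[OF assms(1)] .
  have "0 = (\<Sum>r<d. G (\<sigma> r) - G r)" by (simp add: sum_subtractf reindex)
  also have "\<dots> \<le> (\<Sum>r<d. F (\<sigma> r))" using assms(2) by (intro sum_mono) simp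
  also have "\<dots> = (\<Sum>r<d. F r)" by (rule reindex)
  finally show ?thesis .
qed

lemma sumset_bound:
  fixes a d :: nat and A :: "nat set"
  assumes "0 < d" "d \<le> a" "A \<subseteq> {..<a}"
  shows "(a + d) * card A \<le> a * card {x + y | x y. x \<in> A \<and> y \<in> {0, a mod d, d}}"
proof -
  define c q where "c = a mod d" and "q = a div d"
  define T where "T = {x + y | x y. x \<in> A \<and> y \<in> {0, a mod d, d}}"
  have "finite A" using assms(3) finite_subset by blast
  have "T \<subseteq> (\<lambda>(x, y). x + y) ` (A \<times> {0, a mod d, d})" unfolding T_def by auto
  then have "finite T" using \<open>finite A\<close> finite_subset by blast
  have A_in_T: "\<forall>x\<in>A. x \<in> T \<and> x + c \<in> T \<and> x + d \<in> T"
    unfolding T_def c_def by force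
  define t \<tau> where "t r = int (card (residue_class d r A))"
    and "\<tau> r = int (card (residue_class d r T))" for r
  define C where "C = (\<lambda>x. if x < int c then int q + 1 else int q)"
  define \<sigma> where "\<sigma> r = (r + c) mod d" for r
  define G where "G r = (if t r = C (int r) then int r - int d + 1 else 0)" for r
  define F where "F r = int a * \<tau> r - int (a + d) * t r" for r
  have t_le_C: "t r \<le> C (int r)" if "r < d" for r
    using card_residue_class_le[OF assms(1) that assms(3)]
    by (simp add: t_def C_def c_def q_def split: if_splits)
  have column: "G (\<sigma> r) - G r \<le> F (\<sigma> r)" if "r < d" for r
  proof -
    have "\<sigma> r < d" using assms(1) by (simp add: \<sigma>_def)
    have "(if t (\<sigma> r) = C (int (\<sigma> r)) then int (\<sigma> r) - int d + 1 else 0)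
          - (if t r = C (int r) then int r - int d + 1 else 0)
          \<le> int a * \<tau> (\<sigma> r) - (int a + int d) * t (\<sigma> r)"
    proof (rule column_inequality[OF _ _ _ _ _ _ _ C_def])
      show "0 \<le> int c" "int c < int d" using assms(1) by (simp_all add: c_def)
      show "1 \<le> int q" using assms(1,2) div_greater_zero_iff[of a d] by (simp add: q_def)
      show "int a = int q * int d + int c" by (simp add: q_def c_def flip: of_nat_mult of_nat_add)
      show "0 \<le> int r" "int r < int d" using that by simp_all
      show "int (\<sigma> r) = (int r + int c) mod int d" by (simp add: \<sigma>_def zmod_int)
      show "0 \<le> t (\<sigma> r)" "0 \<le> t r" by (simp_all add: t_def)
      show "t (\<sigma> r) \<le> C (int (\<sigma> r))" "t r \<le> C (int r)"
        using t_le_C \<open>\<sigma> r < d\<close> that by simp_all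
      show "0 < t (\<sigma> r) \<Longrightarrow> t (\<sigma> r) + 1 \<le> \<tau> (\<sigma> r)"
        using card_residue_class_add_period[OF assms(1) \<open>finite T\<close>, of A "\<sigma> r"] A_in_T
        by (fastforce simp: t_def \<tau>_def)
      show "t r \<le> \<tau> (\<sigma> r)"
        using card_residue_class_shift[OF \<open>finite T\<close>, of A c d r] A_in_T
        by (simp add: t_def \<tau>_def \<sigma>_def)
    qed
    then show ?thesis by (simp add: G_def F_def)
  qed
  have "0 \<le> (\<Sum>r<d. F r)"
    using bij_shift_mod[OF assms(1), of c] column unfolding \<sigma>_def
    by (rule sum_nonneg_by_potential)
  also have "\<dots> = int a * (\<Sum>r<d. \<tau> r) - int (a + d) * (\<Sum>r<d. t r)"
    by (simp only: F_def sum_subtractf sum_distrib_left)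
  also have "\<dots> = int a * int (card T) - int (a + d) * int (card A)"
    using card_eq_sum_residue_classes[OF assms(1)] \<open>finite A\<close> \<open>finite T\<close>
    by (simp add: t_def \<tau>_def)
  finally have "int ((a + d) * card A) \<le> int (a * card T)" by simp
  then show ?thesis unfolding T_def by linarith
qed

lemma subspace_S: "pvs.subspace (S n)"
  unfolding pvs.subspace_def S_def
  by (auto intro: degree_add_le order.trans[OF degree_smult_le])

(* S n is spanned by the monomials of degree at most n; so its subspaces are
   finite-dimensional. *)
lemma S_subset_span_monoms: "S n \<subseteq> pvs.span ((\<lambda>i. monom 1 i) ` {..n})"
proof
  fix p assume "p \<in> S n"
  then have "p = (\<Sum>i\<le>n. smult (coeff p i) (monom 1 i))"
    by (simp add: S_def smult_monom poly_as_sum_of_monoms')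
  also have "\<dots> \<in> pvs.span ((\<lambda>i. monom 1 i) ` {..n})"
    by (intro pvs.span_sum pvs.span_scale pvs.span_base) auto
  finally show "p \<in> pvs.span ((\<lambda>i. monom 1 i) ` {..n})" .
qed

lemma span_subset_S:
  assumes "\<And>p. p \<in> F \<Longrightarrow> degree p \<le> n"
  shows "pvs.span F \<subseteq> S n"
  using assms by (intro pvs.span_minimal[OF _ subspace_S]) (auto simp: S_def)

lemma card_independent_le_dim:
  assumes "X \<subseteq> S n" "pvs.independent B" "B \<subseteq> X"
  shows "card B \<le> pvs.dim X"
proof -
  obtain B' where B': "B' \<subseteq> X" "pvs.independent B'" "X \<subseteq> pvs.span B'" "card B' = pvs.dim X"
    by (rule pvs.basis_exists)
  have "finite B'"
    using pvs.independent_span_bound[OF _ B'(2)] B'(1) assms(1) S_subset_span_monoms[of n] by auto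
  moreover have "B \<subseteq> pvs.span B'" using assms(3) B'(3) by auto
  ultimately have "card B \<le> card B'"
    using pvs.independent_span_bound assms(2) by auto
  then show ?thesis using B'(4) by simp
qed

lemma independent_distinct_degrees:
  assumes "finite F" "0 \<notin> F" "inj_on degree F"
  shows "pvs.independent F"
  using assms
proof (induction rule: finite_remove_induct)
  case empty
  then show ?case by (simp add: pvs.independent_empty)
next
  case (remove F)
  define m where "m = Max (degree ` F)"
  have "m \<in> degree ` F" using remove.hyps by (simp add: m_def)
  then obtain p where p: "p \<in> F" "degree p = m" by auto
  have "degree q < m" if "q \<in> F - {p}" for q
  proof -
    have "degree q \<le> m" using that remove.hyps(1) by (simp add: m_def)
    moreover have "degree q \<noteq> m" using that p remove.prems(2) by (auto simp: inj_on_def)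
    ultimately show ?thesis by simp
  qed
  then have "F - {p} \<subseteq> {q. coeff q m = 0}" by (auto intro: coeff_eq_0)
  moreover have "pvs.subspace {q. coeff q m = 0}" by (simp add: pvs.subspace_def)
  ultimately have "pvs.span (F - {p}) \<subseteq> {q. coeff q m = 0}" by (rule pvs.span_minimal)
  moreover have "coeff p m \<noteq> 0" using p remove.prems(1) by auto
  ultimately have "p \<notin> pvs.span (F - {p})" by auto
  moreover have "pvs.independent (F - {p})"
    using remove.IH[OF p(1)] remove.prems by (auto intro: inj_on_subset)
  ultimately have "pvs.independent (insert p (F - {p}))" by (rule pvs.independent_insertI)
  then show ?case using p(1) by (simp add: insert_absorb)
qed

definition degs :: "complex poly set \<Rightarrow> nat set" where
  "degs X = degree ` (X - {0})"

lemma degs_subset: "X \<subseteq> S n \<Longrightarrow> degs X \<subseteq> {..n}"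
  by (auto simp: degs_def S_def)

lemma finite_degs: "X \<subseteq> S n \<Longrightarrow> finite (degs X)"
  using finite_subset[OF degs_subset] by simp

(* One polynomial of each degree occurring in a subspace X spans X: subtracting a
   multiple of the representative of degree (degree w) lowers the degree of w. *)
lemma span_degree_representatives:
  assumes "pvs.subspace X"
    and f: "\<And>k. k \<in> degs X \<Longrightarrow> f k \<in> X \<and> f k \<noteq> 0 \<and> degree (f k) = k"
  shows "X \<subseteq> pvs.span (f ` degs X)"
proof -
  have "w \<in> pvs.span (f ` degs X)" if "w \<in> X" for w
    using that
  proof (induction "degree w" arbitrary: w rule: less_induct)
    case less
    show ?case
    proof (cases "w = 0")
      case True
      then show ?thesis by (simp add: pvs.span_zero)
    next
      case False
      then have deg: "degree w \<in> degs X" using less.prems by (auto simp: degs_def)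
      define g where "g = f (degree w)"
      have g: "g \<in> X" "g \<noteq> 0" "degree g = degree w" using f[OF deg] by (auto simp: g_def)
      define w' where "w' = w - smult (lead_coeff w / lead_coeff g) g"
      have "w' \<in> X" unfolding w'_def
        using assms(1) less.prems g(1) by (intro pvs.subspace_diff pvs.subspace_scale) auto
      have "coeff g (degree w) \<noteq> 0" using g(2,3) by (metis leading_coeff_0_iff)
      then have "coeff w' (degree w) = 0" by (simp add: w'_def g(3))
      moreover have "degree w' \<le> degree w" unfolding w'_def using g(3)
        by (intro degree_diff_le) (auto intro: order.trans[OF degree_smult_le])
      ultimately have "w' = 0 \<or> degree w' < degree w"
        by (metis leading_coeff_0_iff le_neq_implies_less)
      then have "w' \<in> pvs.span (f ` degs X)"
        using less.hyps \<open>w' \<in> X\<close> by (auto simp: pvs.span_zero)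
      moreover have "g \<in> pvs.span (f ` degs X)"
        using deg by (auto simp: g_def intro: pvs.span_base)
      ultimately have "w' + smult (lead_coeff w / lead_coeff g) g \<in> pvs.span (f ` degs X)"
        by (intro pvs.span_add pvs.span_scale)
      then show ?thesis by (simp add: w'_def)
    qed
  qed
  then show ?thesis by blast
qed

lemma dim_eq_card_degs:
  assumes "pvs.subspace X" "X \<subseteq> S n"
  shows "pvs.dim X = card (degs X)"
proof -
  have "\<forall>k\<in>degs X. \<exists>p. p \<in> X \<and> p \<noteq> 0 \<and> degree p = k" by (auto simp: degs_def)
  then obtain f where f: "\<And>k. k \<in> degs X \<Longrightarrow> f k \<in> X \<and> f k \<noteq> 0 \<and> degree (f k) = k"
    by metis
  have fin: "finite (degs X)" using assms(2) by (rule finite_degs)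
  have inj: "inj_on f (degs X)" by (metis f inj_onI)
  have "pvs.independent (f ` degs X)"
    using fin f by (intro independent_distinct_degrees) (auto simp: inj_on_def)
  then have "card (f ` degs X) \<le> pvs.dim X"
    using f by (intro card_independent_le_dim[OF assms(2)]) auto
  moreover have "pvs.dim X \<le> card (f ` degs X)"
    using span_degree_representatives[OF assms(1) f] fin by (intro pvs.dim_le_card) auto
  ultimately show ?thesis using card_image[OF inj] by simp
qed

lemma dim_pos:
  assumes "pvs.subspace X" "X \<subseteq> S n" "X \<noteq> {0}"
  shows "0 < pvs.dim X"
proof -
  obtain w where "w \<in> X" "w \<noteq> 0" using assms(1,3) pvs.subspace_0 by blast
  then have "degs X \<noteq> {}" by (auto simp: degs_def)
  then show ?thesis using assms finite_degs[OF assms(2)] by (simp add: dim_eq_card_degs card_gt_0_iff)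
qed

lemma prodsp_subset_S:
  assumes "V \<subseteq> S m" "W \<subseteq> S n"
  shows "prodsp V W \<subseteq> S (m + n)"
  unfolding prodsp_def
proof (rule pvs.span_minimal[OF _ subspace_S])
  show "{f * g |f g. f \<in> V \<and> g \<in> W} \<subseteq> S (m + n)"
  proof (intro subsetI, elim CollectE exE conjE)
    fix h f g assume "h = f * g" "f \<in> V" "g \<in> W"
    then have "degree f \<le> m" "degree g \<le> n" using assms by (auto simp: S_def)
    then show "h \<in> S (m + n)"
      using degree_mult_le[of f g] \<open>h = f * g\<close> by (simp add: S_def)
  qed
qed

lemma degs_prodsp_monoms:
  assumes "\<And>y. y \<in> Y \<Longrightarrow> monom 1 y \<in> V"
  shows "{x + y | x y. x \<in> degs W \<and> y \<in> Y} \<subseteq> degs (prodsp V W)"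
proof
  fix z assume "z \<in> {x + y | x y. x \<in> degs W \<and> y \<in> Y}"
  then obtain g y where g: "g \<in> W" "g \<noteq> 0" and y: "y \<in> Y" and z: "z = degree g + y"
    by (auto simp: degs_def)
  have "monom 1 y * g \<in> prodsp V W"
    unfolding prodsp_def using assms[OF y] g(1) by (intro pvs.span_base) blast
  moreover have "monom 1 y * g \<noteq> 0" using g(2) by simp
  moreover have "degree (monom 1 y * g) = z"
    using g(2) z by (simp add: degree_mult_eq degree_monom_eq)
  ultimately show "z \<in> degs (prodsp V W)" unfolding degs_def by force
qed

lemma card_sumset_le_dim_prodsp:
  assumes "V \<subseteq> S m" "W \<subseteq> S n" "\<And>y. y \<in> Y \<Longrightarrow> monom 1 y \<in> V"
  shows "card {x + y | x y. x \<in> degs W \<and> y \<in> Y} \<le> pvs.dim (prodsp V W)"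
proof -
  have P: "prodsp V W \<subseteq> S (m + n)" using assms(1,2) by (rule prodsp_subset_S)
  have "card {x + y | x y. x \<in> degs W \<and> y \<in> Y} \<le> card (degs (prodsp V W))"
    using degs_prodsp_monoms[OF assms(3)] finite_degs[OF P] by (rule card_mono[rotated])
  also have "\<dots> = pvs.dim (prodsp V W)"
    using P by (intro dim_eq_card_degs[symmetric]) (simp_all add: prodsp_def pvs.subspace_span)
  finally show ?thesis .
qed

theorem mainTheorem5:
  fixes a b c :: nat and V :: "complex poly set"
  assumes "0 < a" and "a < b" and "b \<le> 2 * a"
    and "c = a mod (b - a)"
    and "V = pvs.span {1, monom 1 c, monom 1 (b - a)}"
  shows "\<forall>W. pvs.subspace W \<and> W \<subseteq> S (a - 1) \<and> W \<noteq> {0}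
           \<longrightarrow> mu V W \<ge> real b / real a"
proof (intro allI impI)
  fix W assume W: "pvs.subspace W \<and> W \<subseteq> S (a - 1) \<and> W \<noteq> {0}"
  define d where "d = b - a"
  have d: "0 < d" "d \<le> a" "b = a + d" "c = a mod d" using assms(2-4) by (auto simp: d_def)
  have V_monoms: "V = pvs.span {monom 1 0, monom 1 c, monom 1 d}"
    by (simp add: assms(5) d_def monom_0 one_pCons)
  have "V \<subseteq> S d" unfolding V_monoms using d by (intro span_subset_S) (auto simp: degree_monom_eq)
  moreover have "monom 1 y \<in> V" if "y \<in> {0, a mod d, d}" for y
    using that unfolding V_monoms d(4) by (intro pvs.span_base) auto
  ultimately have sumset_le: "card {x + y | x y. x \<in> degs W \<and> y \<in> {0, a mod d, d}}
      \<le> pvs.dim (prodsp V W)"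
    using W by (intro card_sumset_le_dim_prodsp) auto
  have "degs W \<subseteq> {..<a}" using degs_subset[of W "a - 1"] W assms(1) by auto
  moreover have "pvs.dim W = card (degs W)" using W by (intro dim_eq_card_degs) auto
  ultimately have "b * pvs.dim W \<le> a * card {x + y | x y. x \<in> degs W \<and> y \<in> {0, a mod d, d}}"
    using sumset_bound[OF d(1,2)] d(3) by simp
  also have "\<dots> \<le> a * pvs.dim (prodsp V W)" using sumset_le by simp
  finally have "real b * real (pvs.dim W) \<le> real a * real (pvs.dim (prodsp V W))"
    by (metis of_nat_le_iff of_nat_mult)
  then show "real b / real a \<le> mu V W"
    using assms(1) dim_pos[of W "a - 1"] W by (simp add: mu_def divide_simps mult.commute)
qed

end
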